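(* Let $\vec d=(\vec a,\vec b)$ be a bidegree sequence of length $n$ with $\sum_i a_i=\sum_i b_i=n\bar c$, and let $M=\max\vec d$ with $M<n$. (i) If $k:=\#\{i: a_i=M\}$ satisfies $M\le k$, then $\vec d$ is graphic with loops. (ii) More generally, if there is $k\in\mathbb{N}$ with $M\le k$ and $Mk\le n\bar c$, then $\vec d$ is graphic with loops.
   Context: A bidegree sequence of length $n$ is a pair $\vec d=(\vec a,\vec b)$ with $\vec a=(a_1,\dots,a_n)\in\mathbb{N}_0^n$ and $\vec b=(b_1,\dots,b_n)\in\mathbb{N}_0^n$. It is graphic with loops if there is an $n\times n$ matrix with entries in $\{0,1\}$ whose $i$th row sum is $a_i$ and whose $i$th column sum is $b_i$ for every $i\in[1..n]$; it is graphic if such a matrix exists with all diagonal entries equal to $0$. $\max\vec d$ and $\min\vec d$ denote the maximum and minimum over all $2n$ entries $a_1,\dots,a_n,b_1,\dots,b_n$. The number $\bar c$ (the average degree) is defined by $\sum_i a_i=\sum_i b_i=n\bar c$. *)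

theory Defs
  imports Main
begin

definition graphic_with_loops :: "nat \<Rightarrow> (nat \<Rightarrow> nat) \<Rightarrow> (nat \<Rightarrow> nat) \<Rightarrow> bool" where
  "graphic_with_loops n a b \<longleftrightarrow>
     (\<exists>X :: nat \<Rightarrow> nat \<Rightarrow> nat.
        (\<forall>i<n. \<forall>j<n. X i j \<in> {0, 1}) \<and>
        (\<forall>i<n. (\<Sum>j<n. X i j) = a i) \<and>
        (\<forall>j<n. (\<Sum>i<n. X i j) = b j))"

definition maxd :: "nat \<Rightarrow> (nat \<Rightarrow> nat) \<Rightarrow> (nat \<Rightarrow> nat) \<Rightarrow> nat" where
  "maxd n a b = Max (a ` {..<n} \<union> b ` {..<n})"

end

theory Submission
  imports Defs
begin

text \<open>With \<open>M\<close> the maximal entry and \<open>S\<close> the common sum, both parts follow from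
\<open>M\<^sup>2 \<le> S\<close>: in (ii) because \<open>M\<^sup>2 \<le> M k \<le> S\<close>, and (i) is (ii) with \<open>k\<close> the number of rows
of sum \<open>M\<close>. Under \<open>M\<^sup>2 \<le> S\<close> the Gale--Ryser condition
\<open>\<Sum>i\<in>R. a i \<le> \<Sum>j. min (b j) |R|\<close> holds for every set \<open>R\<close> of rows: for \<open>|R| \<ge> M\<close> the
right-hand side is all of \<open>S\<close>; for \<open>|R| < M\<close> the termwise bound
\<open>|R| b j \<le> M min (b j) |R|\<close> gives \<open>M (|R| M) \<le> |R| S \<le> M \<Sum>j. min (b j) |R|\<close>, while the
left-hand side is at most \<open>|R| M\<close>. The Gale--Ryser condition suffices by a greedy
construction: one row \<open>r\<close> is filled into the \<open>a r\<close> columns of largest sum, and the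
condition persists for the remaining rows and the reduced column sums.\<close>

definition gale_ryser_condition :: "'a set \<Rightarrow> ('a \<Rightarrow> nat) \<Rightarrow> nat \<Rightarrow> (nat \<Rightarrow> nat) \<Rightarrow> bool" where
  "gale_ryser_condition I a n b \<longleftrightarrow> (\<forall>R\<subseteq>I. sum a R \<le> (\<Sum>j<n. min (b j) (card R)))"

definition has_zero_one_matrix :: "'a set \<Rightarrow> ('a \<Rightarrow> nat) \<Rightarrow> nat \<Rightarrow> (nat \<Rightarrow> nat) \<Rightarrow> bool" where
  "has_zero_one_matrix I a n b \<longleftrightarrow>
     (\<exists>X :: 'a \<Rightarrow> nat \<Rightarrow> nat.
        (\<forall>i\<in>I. \<forall>j<n. X i j \<in> {0, 1}) \<and>
        (\<forall>i\<in>I. (\<Sum>j<n. X i j) = a i) \<and>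
        (\<forall>j<n. (\<Sum>i\<in>I. X i j) = b j))"

lemma graphic_with_loops_iff_has_zero_one_matrix:
  "graphic_with_loops n a b \<longleftrightarrow> has_zero_one_matrix {..<n} a n b"
  unfolding graphic_with_loops_def has_zero_one_matrix_def by auto

lemma exists_top_subset:
  fixes b :: "'a \<Rightarrow> nat"
  assumes "finite A" and "k \<le> card A"
  shows "\<exists>T\<subseteq>A. card T = k \<and> (\<forall>j\<in>T. \<forall>j'\<in>A - T. b j' \<le> b j)"
  using assms(2)
proof (induction k)
  case 0
  then show ?case by auto
next
  case (Suc k)
  then obtain T where T: "T \<subseteq> A" "card T = k" "\<forall>j\<in>T. \<forall>j'\<in>A - T. b j' \<le> b j"
    by auto
  have fin_rest: "finite (A - T)"
    using assms(1) by simp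
  have "card (A - T) = card A - k"
    using T assms(1) by (simp add: card_Diff_subset finite_subset)
  then have "0 < card (A - T)"
    using Suc.prems by simp
  then have "A - T \<noteq> {}"
    by (metis card.empty less_irrefl)
  then have "Max (b ` (A - T)) \<in> b ` (A - T)"
    using fin_rest by (intro Max_in) auto
  then obtain m where m: "m \<in> A - T" "b m = Max (b ` (A - T))"
    by auto
  have m_max: "\<forall>j'\<in>A - T. b j' \<le> b m"
    using m fin_rest by simp
  have "finite T"
    using T(1) assms(1) finite_subset by blast
  show ?case
  proof (intro exI[of _ "insert m T"] conjI)
    show "insert m T \<subseteq> A" and "card (insert m T) = Suc k"
      using T m(1) \<open>finite T\<close> by auto
    show "\<forall>j\<in>insert m T. \<forall>j'\<in>A - insert m T. b j' \<le> b j"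
    proof (intro ballI)
      fix j j' assume j: "j \<in> insert m T" and j': "j' \<in> A - insert m T"
      then have "j' \<in> A - T"
        by blast
      then show "b j' \<le> b j"
        using j m_max T(3) by (cases "j = m") simp_all
    qed
  qed
qed

lemma sum_min_one_eq_card_positive:
  fixes b :: "'a \<Rightarrow> nat"
  assumes "finite A"
  shows "(\<Sum>j\<in>A. min (b j) 1) = card {j\<in>A. 0 < b j}"
proof -
  have "(\<Sum>j\<in>A. min (b j) 1) = (\<Sum>j\<in>A. of_bool (0 < b j))"
    by (intro sum.cong) auto
  also have "\<dots> = card {j\<in>A. 0 < b j}"
    using assms by (simp add: Collect_conj_eq Int_commute)
  finally show ?thesis .
qed

lemma top_subset_positive:
  fixes b :: "'a \<Rightarrow> nat"
  assumes "finite A" and "T \<subseteq> A" and top: "\<forall>j\<in>T. \<forall>j'\<in>A - T. b j' \<le> b j"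
    and "card T \<le> card {j\<in>A. 0 < b j}"
  shows "\<forall>j\<in>T. 0 < b j"
proof (rule ccontr)
  assume "\<not> (\<forall>j\<in>T. 0 < b j)"
  then obtain j0 where j0: "j0 \<in> T" "b j0 = 0"
    by auto
  have "finite T"
    using assms(1,2) by (rule finite_subset[rotated])
  have "{j\<in>A. 0 < b j} \<subseteq> T - {j0}"
    using top j0 by force
  then have "card {j\<in>A. 0 < b j} \<le> card (T - {j0})"
    using \<open>finite T\<close> by (intro card_mono) auto
  also have "\<dots> < card T"
    using \<open>finite T\<close> j0(1) by (rule card_Diff1_less)
  finally show False
    using assms(4) by simp
qed

text \<open>If some column outside \<open>T\<close> has sum above \<open>|R|\<close>, then so do all columns of \<open>T\<close>, and
lowering them by one leaves each \<open>min (b j) |R|\<close> unchanged; otherwise the condition for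
\<open>R \<union> {r}\<close> is exactly what is needed.\<close>

lemma gale_ryser_condition_remove_row:
  assumes cond: "gale_ryser_condition (insert r F) a n b" and "finite F" and "r \<notin> F"
    and T: "T \<subseteq> {..<n}" "card T = a r" and top: "\<forall>j\<in>T. \<forall>j'\<in>{..<n} - T. b j' \<le> b j"
    and pos: "\<forall>j\<in>T. 0 < b j"
  shows "gale_ryser_condition F a n (\<lambda>j. b j - of_bool (j \<in> T))"
  unfolding gale_ryser_condition_def
proof (intro allI impI)
  fix R assume "R \<subseteq> F"
  define q where "q = card R"
  let ?b' = "\<lambda>j. b j - of_bool (j \<in> T)"
  have "finite R" "r \<notin> R"
    using \<open>R \<subseteq> F\<close> \<open>finite F\<close> \<open>r \<notin> F\<close> finite_subset by auto
  have sum_T: "(\<Sum>j<n. of_bool (j \<in> T)) = card T"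
    using T by (simp add: Int_absorb1)
  show "sum a R \<le> (\<Sum>j<n. min (?b' j) (card R))"
  proof (cases "\<forall>j<n. q < b j \<longrightarrow> j \<in> T")
    case True
    have "sum a R + a r = sum a (insert r R)"
      using \<open>finite R\<close> \<open>r \<notin> R\<close> by simp
    also have "\<dots> \<le> (\<Sum>j<n. min (b j) (Suc q))"
      using cond \<open>R \<subseteq> F\<close> \<open>finite R\<close> \<open>r \<notin> R\<close>
      unfolding gale_ryser_condition_def q_def by (metis card_insert_disjoint insert_mono)
    also have "\<dots> = (\<Sum>j<n. min (?b' j) q + of_bool (j \<in> T))"
      using True pos by (intro sum.cong) (auto simp: min_def not_less)
    also have "\<dots> = (\<Sum>j<n. min (?b' j) q) + a r"
      using sum_T T by (simp add: sum.distrib)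
    finally show ?thesis
      unfolding q_def by simp
  next
    case False
    then obtain j0 where j0: "j0 < n" "q < b j0" "j0 \<notin> T"
      by auto
    have "sum a R \<le> (\<Sum>j<n. min (b j) q)"
      using cond \<open>R \<subseteq> F\<close> unfolding gale_ryser_condition_def q_def by auto
    also have "\<dots> = (\<Sum>j<n. min (?b' j) q)"
    proof (intro sum.cong refl)
      fix j assume "j \<in> {..<n}"
      show "min (b j) q = min (?b' j) q"
      proof (cases "j \<in> T")
        case True
        with top j0 have "q < b j"
          by (meson DiffI lessThan_iff order_less_le_trans singletonD)
        then show ?thesis
          by simp
      qed simp
    qed
    finally show ?thesis
      unfolding q_def .
  qed
qed

theorem gale_ryser_sufficiency:
  assumes "finite I" and "sum a I = (\<Sum>j<n. b j)" and "gale_ryser_condition I a n b"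
  shows "has_zero_one_matrix I a n b"
  using assms
proof (induction I arbitrary: b rule: finite_induct)
  case empty
  then show ?case
    unfolding has_zero_one_matrix_def by (intro exI[of _ "\<lambda>_ _. 0"]) auto
next
  case (insert r F)
  have "sum a {r} \<le> (\<Sum>j<n. min (b j) (card {r}))"
    using insert.prems(2) unfolding gale_ryser_condition_def by blast
  then have "a r \<le> (\<Sum>j<n. min (b j) 1)"
    by simp
  also have "\<dots> = card {j\<in>{..<n}. 0 < b j}"
    using sum_min_one_eq_card_positive[of "{..<n}" b] by simp
  finally have row_le: "a r \<le> card {j\<in>{..<n}. 0 < b j}" .
  also have "\<dots> \<le> card {..<n}"
    by (intro card_mono) auto
  finally have "\<exists>T\<subseteq>{..<n}. card T = a r \<and> (\<forall>j\<in>T. \<forall>j'\<in>{..<n} - T. b j' \<le> b j)"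
    by (rule exists_top_subset[OF finite_lessThan])
  then obtain T where T: "T \<subseteq> {..<n}" "card T = a r"
      and top: "\<forall>j\<in>T. \<forall>j'\<in>{..<n} - T. b j' \<le> b j"
    by blast
  have pos: "\<forall>j\<in>T. 0 < b j"
    using T(2) row_le by (intro top_subset_positive[OF finite_lessThan T(1) top]) simp
  define b' where "b' j = b j - of_bool (j \<in> T)" for j
  have b_eq: "b j = b' j + of_bool (j \<in> T)" for j
    using pos unfolding b'_def by auto
  have "(\<Sum>j<n. b j) = (\<Sum>j<n. b' j) + (\<Sum>j<n. of_bool (j \<in> T))"
    unfolding sum.distrib[symmetric] by (intro sum.cong refl b_eq)
  also have "(\<Sum>j<n. of_bool (j \<in> T)) = a r"
    using T by (simp add: Int_absorb1)
  finally have "(\<Sum>j<n. b j) = (\<Sum>j<n. b' j) + a r" .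
  then have "sum a F = (\<Sum>j<n. b' j)"
    using insert.prems(1) insert.hyps by simp
  moreover have "gale_ryser_condition F a n b'"
    using gale_ryser_condition_remove_row[OF insert.prems(2) insert.hyps T top pos]
    unfolding b'_def .
  ultimately obtain X where X: "\<forall>i\<in>F. \<forall>j<n. X i j \<in> {0, 1}" "\<forall>i\<in>F. (\<Sum>j<n. X i j) = a i"
      "\<forall>j<n. (\<Sum>i\<in>F. X i j) = b' j"
    using insert.IH unfolding has_zero_one_matrix_def by blast
  define Y where "Y i j = (if i = r then of_bool (j \<in> T) else X i j)" for i j
  show ?case
    unfolding has_zero_one_matrix_def
  proof (intro exI[of _ Y] conjI ballI allI impI)
    fix i j assume "i \<in> insert r F" and "j < n"
    then show "Y i j \<in> {0, 1}"
      using X(1) by (cases "i = r") (simp_all add: Y_def)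
  next
    fix i assume i: "i \<in> insert r F"
    show "(\<Sum>j<n. Y i j) = a i"
    proof (cases "i = r")
      case True
      then show ?thesis
        using T by (simp add: Y_def Int_absorb1)
    next
      case False
      then show ?thesis
        using i X(2) by (simp add: Y_def)
    qed
  next
    fix j assume "j < n"
    have "(\<Sum>i\<in>F. Y i j) = (\<Sum>i\<in>F. X i j)"
      using insert.hyps by (intro sum.cong) (auto simp: Y_def)
    then have "(\<Sum>i\<in>insert r F. Y i j) = of_bool (j \<in> T) + (\<Sum>i\<in>F. X i j)"
      using insert.hyps by (simp add: Y_def)
    also have "\<dots> = b j"
      using X(3) \<open>j < n\<close> by (simp add: b_eq)
    finally show "(\<Sum>i\<in>insert r F. Y i j) = b j" .
  qed
qed

lemma gale_ryser_condition_if_square_max_le_sum: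
  fixes a :: "'a \<Rightarrow> nat"
  assumes "finite I" and a_le: "\<forall>i\<in>I. a i \<le> M" and b_le: "\<forall>j<n. b j \<le> M"
    and sums: "sum a I = (\<Sum>j<n. b j)" and square: "M * M \<le> sum a I"
  shows "gale_ryser_condition I a n b"
  unfolding gale_ryser_condition_def
proof (intro allI impI)
  fix R assume "R \<subseteq> I"
  define q where "q = card R"
  have row_bound: "sum a R \<le> q * M"
    using sum_mono[of R a "\<lambda>_. M"] a_le \<open>R \<subseteq> I\<close> unfolding q_def by auto
  show "sum a R \<le> (\<Sum>j<n. min (b j) (card R))"
  proof (cases "M \<le> q")
    case True
    have "sum a R \<le> sum a I"
      using \<open>R \<subseteq> I\<close> \<open>finite I\<close> by (intro sum_mono2) auto
    also have "\<dots> = (\<Sum>j<n. min (b j) q)"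
      using sums b_le True by (auto intro!: sum.cong simp: min_def)
    finally show ?thesis
      unfolding q_def .
  next
    case False
    have "M * (q * M) \<le> q * sum a I"
      using square by (metis mult.commute mult.left_commute mult_le_mono2)
    also have "\<dots> = (\<Sum>j<n. q * b j)"
      using sums by (simp add: sum_distrib_left)
    also have "\<dots> \<le> (\<Sum>j<n. M * min (b j) q)"
      using False b_le by (intro sum_mono) (auto simp: min_def mult.commute)
    also have "\<dots> = M * (\<Sum>j<n. min (b j) q)"
      by (simp add: sum_distrib_left)
    finally have "q * M \<le> (\<Sum>j<n. min (b j) q)"
      using False by simp
    with row_bound show ?thesis
      unfolding q_def by simp
  qed
qed

lemma le_maxd:
  assumes "i < n"
  shows "a i \<le> maxd n a b" and "b i \<le> maxd n a b"
  using assms unfolding maxd_def by (auto intro: Max_ge)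

lemma graphic_with_loops_if_square_maxd_le_sum:
  assumes "(\<Sum>i<n. a i) = (\<Sum>i<n. b i)" and "maxd n a b * maxd n a b \<le> (\<Sum>i<n. a i)"
  shows "graphic_with_loops n a b"
proof -
  have "gale_ryser_condition {..<n} a n b"
    using assms le_maxd[where n=n and a=a and b=b]
    by (intro gale_ryser_condition_if_square_max_le_sum) auto
  then show ?thesis
    using assms(1) by (simp add: graphic_with_loops_iff_has_zero_one_matrix gale_ryser_sufficiency)
qed

theorem corollary2:
  fixes n :: nat and a b :: "nat \<Rightarrow> nat"
  assumes sums: "(\<Sum>i<n. a i) = (\<Sum>i<n. b i)"
    and Mn: "maxd n a b < n"
  shows "(maxd n a b \<le> card {i. i < n \<and> a i = maxd n a b} \<longrightarrow> graphic_with_loops n a b)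
       \<and> ((\<exists>k::nat. maxd n a b \<le> k \<and> maxd n a b * k \<le> (\<Sum>i<n. a i)) \<longrightarrow> graphic_with_loops n a b)"
proof -
  define M where "M = maxd n a b"
  define S where "S = (\<Sum>i<n. a i)"
  have part_ii: "graphic_with_loops n a b" if "M \<le> k" "M * k \<le> S" for k
  proof -
    have "M * M \<le> S"
      using that by (meson le_trans mult_le_mono2)
    then show ?thesis
      using graphic_with_loops_if_square_maxd_le_sum sums unfolding M_def S_def by blast
  qed
  have "card {i. i < n \<and> a i = M} * M = (\<Sum>i\<in>{i. i < n \<and> a i = M}. a i)"
    by simp
  also have "\<dots> \<le> S"
    unfolding S_def by (intro sum_mono2) auto
  finally have "M * card {i. i < n \<and> a i = M} \<le> S"
    by (simp add: mult.commute)
  then have part_i: "graphic_with_loops n a b" if "M \<le> card {i. i < n \<and> a i = M}"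
    using part_ii that by blast
  show ?thesis
    using part_i part_ii unfolding M_def S_def by blast
qed

end
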